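(* Let $\mathcal H$ be an infinite-dimensional complex Hilbert space and let $\mathcal B_f(\mathcal H)$ be the set of bounded forms in $\mathcal V_f(\mathcal H)$. Then $(\mathcal B_f(\mathcal H);\oplus_{|\mathcal B_f(\mathcal H)},o)$ is a sub-generalized effect algebra of the generalized effect algebra $(\mathcal V_f(\mathcal H);\oplus,o)$.
   Context: Bilinear forms $t$ on $\mathcal H$ are sesquilinear maps $D(t)\times D(t)\to\mathbb C$ on a dense linear subspace $D(t)$ (linear in the first argument); $t$ is positive if $t(x,x)\ge0$ on $D(t)$, bounded if $\sup\{t(x,x)\mid x\in D(t),\|x\|=1\}<\infty$. The sum $t+s$ has domain $D(t)\cap D(s)$. $o$ is the zero form on $\mathcal H$. $\mathcal V_f(\mathcal H)$ is the set of positive bilinear forms $t$ with dense domain such that $D(t)=\mathcal H$ whenever $t$ is bounded; $t\oplus s$ is defined iff $t$ or $s$ is bounded or $D(t)=D(s)$, and then $t\oplus s=t+s$; this makes $(\mathcal V_f(\mathcal H);\oplus,o)$ a generalized effect algebra (partial commutative, associative operation with neutral element $0$, cancellation, and $x\oplus y=0\Rightarrow x=y=0$). A subset $Q$ of a generalized effect algebra $E$ is a sub-generalized effect algebra if $0\in Q$ and whenever $x\oplus y=z$ in $E$ with at least two of $x,y,z$ in $Q$, then all of $x,y,z$ lie in $Q$. For $Q\subseteq E$, $x\oplus_{|Q}y$ is defined iff $x\oplus y$ is defined in $E$ and lies in $Q$, and then equals $x\oplus y$. *)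

theory Defs
  imports "HOL-Analysis.Analysis"
begin

text \<open>The distribution has no class of complex inner product spaces, so we introduce one:
  a real Banach space carrying a complex scalar multiplication (compatible with the real one)
  and a complex inner product (linear in the first argument) inducing the norm.\<close>

class complex_hilbert = real_normed_vector + complete_space +
  fixes scaleC :: "complex \<Rightarrow> 'a \<Rightarrow> 'a" (infixr \<open>*\<^sub>C\<close> 75)
    and cinner :: "'a \<Rightarrow> 'a \<Rightarrow> complex"
  assumes scaleC_of_real: "scaleC (complex_of_real r) x = scaleR r x"
    and scaleC_add_right: "scaleC c (x + y) = scaleC c x + scaleC c y"
    and scaleC_add_left: "scaleC (c + d) x = scaleC c x + scaleC d x"
    and scaleC_scaleC: "scaleC c (scaleC d x) = scaleC (c * d) x"
    and scaleC_one: "scaleC 1 x = x"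
    and cinner_add_left: "cinner (x + y) z = cinner x z + cinner y z"
    and cinner_scaleC_left: "cinner (scaleC c x) y = c * cinner x y"
    and cinner_commute: "cinner y x = cnj (cinner x y)"
    and cinner_norm: "cinner x x = complex_of_real ((norm x)\<^sup>2)"

definition infinite_dimensional :: "'a::complex_hilbert itself \<Rightarrow> bool" where
  "infinite_dimensional _ \<longleftrightarrow>
     \<not> (\<exists>S::'a set. finite S \<and> (\<forall>x. \<exists>c. x = (\<Sum>s\<in>S. c s *\<^sub>C s)))"

text \<open>A form is represented by a pair (domain, values). To make equality of forms coincide
  with equality of pairs, the value function is required to vanish outside domain x domain.\<close>

type_synonym 'a form = "'a set \<times> ('a \<Rightarrow> 'a \<Rightarrow> complex)"

definition cspace :: "'a::complex_hilbert set \<Rightarrow> bool" where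
  "cspace D \<longleftrightarrow> 0 \<in> D \<and> (\<forall>x\<in>D. \<forall>y\<in>D. x + y \<in> D) \<and> (\<forall>c. \<forall>x\<in>D. c *\<^sub>C x \<in> D)"

definition is_form :: "'a::complex_hilbert form \<Rightarrow> bool" where
  "is_form f \<longleftrightarrow> (case f of (D, t) \<Rightarrow>
     cspace D \<and> closure D = UNIV \<and>
     (\<forall>x\<in>D. \<forall>y\<in>D. \<forall>z\<in>D. \<forall>a b.
        t (a *\<^sub>C x + b *\<^sub>C y) z = a * t x z + b * t y z \<and>
        t z (a *\<^sub>C x + b *\<^sub>C y) = cnj a * t z x + cnj b * t z y) \<and>
     (\<forall>x y. \<not> (x \<in> D \<and> y \<in> D) \<longrightarrow> t x y = 0))"

definition form_dom :: "'a form \<Rightarrow> 'a set" where "form_dom f = fst f"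
definition form_val :: "'a form \<Rightarrow> 'a \<Rightarrow> 'a \<Rightarrow> complex" where "form_val f = snd f"

definition positive_form :: "'a::complex_hilbert form \<Rightarrow> bool" where
  "positive_form f \<longleftrightarrow> (\<forall>x\<in>form_dom f. form_val f x x \<in> \<real> \<and> 0 \<le> Re (form_val f x x))"

definition bounded_form :: "'a::complex_hilbert form \<Rightarrow> bool" where
  "bounded_form f \<longleftrightarrow> (\<exists>C. \<forall>x\<in>form_dom f. norm x = 1 \<longrightarrow> cmod (form_val f x x) \<le> C)"

definition form_plus :: "'a form \<Rightarrow> 'a form \<Rightarrow> 'a form" where
  "form_plus f g = (form_dom f \<inter> form_dom g,
     \<lambda>x y. if x \<in> form_dom f \<inter> form_dom g \<and> y \<in> form_dom f \<inter> form_dom g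
           then form_val f x y + form_val g x y else 0)"

definition zero_form :: "'a form" where
  "zero_form = (UNIV, \<lambda>x y. 0)"

definition Vf :: "'a::complex_hilbert form set" where
  "Vf = {t. is_form t \<and> positive_form t \<and> (bounded_form t \<longrightarrow> form_dom t = UNIV)}"

definition Bf :: "'a::complex_hilbert form set" where
  "Bf = {t \<in> Vf. bounded_form t}"

definition Vf_oplus :: "'a::complex_hilbert form \<Rightarrow> 'a form \<Rightarrow> 'a form option" where
  "Vf_oplus t s = (if bounded_form t \<or> bounded_form s \<or> form_dom t = form_dom s
                   then Some (form_plus t s) else None)"

definition sub_gen_effect_algebra ::
  "'e set \<Rightarrow> ('e \<Rightarrow> 'e \<Rightarrow> 'e option) \<Rightarrow> 'e \<Rightarrow> 'e set \<Rightarrow> bool" where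
  "sub_gen_effect_algebra E opl z Q \<longleftrightarrow>
     Q \<subseteq> E \<and> z \<in> Q \<and>
     (\<forall>x\<in>E. \<forall>y\<in>E. \<forall>w\<in>E. opl x y = Some w \<longrightarrow>
        ((x \<in> Q \<and> y \<in> Q) \<or> (x \<in> Q \<and> w \<in> Q) \<or> (y \<in> Q \<and> w \<in> Q)) \<longrightarrow>
        x \<in> Q \<and> y \<in> Q \<and> w \<in> Q)"

definition restrict_op :: "('e \<Rightarrow> 'e \<Rightarrow> 'e option) \<Rightarrow> 'e set \<Rightarrow> 'e \<Rightarrow> 'e \<Rightarrow> 'e option" where
  "restrict_op opl Q x y = (case opl x y of Some w \<Rightarrow> if w \<in> Q then Some w else None | None \<Rightarrow> None)"

end

theory Submission
  imports Defs
begin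

text \<open>Bounded forms are closed under sums by the triangle inequality for the quadratic forms,
  and also under differences: if \<open>t\<close> and \<open>t + s\<close> are bounded, the latter has full domain, so
  \<open>s = (t + s) - t\<close> on all of \<open>\<H>\<close> and \<open>s\<close> is bounded.\<close>

lemma form_dom_form_plus [simp]: "form_dom (form_plus f g) = form_dom f \<inter> form_dom g"
  by (simp add: form_plus_def form_dom_def)

lemma form_val_form_plus:
  "x \<in> form_dom f \<Longrightarrow> x \<in> form_dom g \<Longrightarrow>
    form_val (form_plus f g) x x = form_val f x x + form_val g x x"
  by (simp add: form_plus_def form_dom_def form_val_def)

lemma form_plus_commute: "form_plus f g = form_plus g f"
  unfolding form_plus_def by (auto simp: add.commute intro!: ext)

lemma bounded_form_plus:
  assumes "bounded_form f" "bounded_form g"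
  shows "bounded_form (form_plus f g)"
proof -
  obtain C where C: "\<forall>x\<in>form_dom f. norm x = 1 \<longrightarrow> cmod (form_val f x x) \<le> C"
    using assms(1) unfolding bounded_form_def by blast
  obtain D where D: "\<forall>x\<in>form_dom g. norm x = 1 \<longrightarrow> cmod (form_val g x x) \<le> D"
    using assms(2) unfolding bounded_form_def by blast
  show ?thesis unfolding bounded_form_def
  proof (intro exI[of _ "C + D"] ballI impI)
    fix x assume x: "x \<in> form_dom (form_plus f g)" "norm x = 1"
    then have xf: "x \<in> form_dom f" and xg: "x \<in> form_dom g" by auto
    have "cmod (form_val (form_plus f g) x x) = cmod (form_val f x x + form_val g x x)"
      using xf xg by (simp add: form_val_form_plus)
    also have "\<dots> \<le> cmod (form_val f x x) + cmod (form_val g x x)"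
      by (rule norm_triangle_ineq)
    also have "\<dots> \<le> C + D" using C D xf xg x(2) by (meson add_mono)
    finally show "cmod (form_val (form_plus f g) x x) \<le> C + D" .
  qed
qed

lemma bounded_form_plus_cancel:
  assumes "bounded_form f" "bounded_form (form_plus f g)" "form_dom g \<subseteq> form_dom f"
  shows "bounded_form g"
proof -
  obtain C where C: "\<forall>x\<in>form_dom f. norm x = 1 \<longrightarrow> cmod (form_val f x x) \<le> C"
    using assms(1) unfolding bounded_form_def by blast
  obtain D where D: "\<forall>x\<in>form_dom (form_plus f g).
      norm x = 1 \<longrightarrow> cmod (form_val (form_plus f g) x x) \<le> D"
    using assms(2) unfolding bounded_form_def by blast
  show ?thesis unfolding bounded_form_def
  proof (intro exI[of _ "D + C"] ballI impI)
    fix x assume x: "x \<in> form_dom g" "norm x = 1"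
    then have xf: "x \<in> form_dom f" and xs: "x \<in> form_dom (form_plus f g)"
      using assms(3) by auto
    have "form_val g x x = form_val (form_plus f g) x x - form_val f x x"
      using xf x by (simp add: form_val_form_plus)
    then have "cmod (form_val g x x) \<le> cmod (form_val (form_plus f g) x x) + cmod (form_val f x x)"
      by (metis norm_triangle_ineq4)
    also have "\<dots> \<le> D + C" using C D xf xs x(2) by (meson add_mono)
    finally show "cmod (form_val g x x) \<le> D + C" .
  qed
qed

lemma zero_form_in_Bf: "zero_form \<in> Bf"
  unfolding Bf_def Vf_def is_form_def positive_form_def bounded_form_def zero_form_def
    cspace_def form_dom_def form_val_def
  by auto

lemma form_dom_Bf: "t \<in> Bf \<Longrightarrow> form_dom t = UNIV"
  by (simp add: Bf_def Vf_def)

lemma Vf_oplus_SomeD: "Vf_oplus t s = Some w \<Longrightarrow> w = form_plus t s"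
  by (simp add: Vf_oplus_def split: if_splits)

lemma form_plus_in_Bf:
  "t \<in> Bf \<Longrightarrow> s \<in> Bf \<Longrightarrow> form_plus t s \<in> Vf \<Longrightarrow> form_plus t s \<in> Bf"
  by (simp add: Bf_def bounded_form_plus)

lemma Bf_form_plus_cancel:
  assumes "t \<in> Bf" "form_plus t s \<in> Bf" "s \<in> Vf"
  shows "s \<in> Bf"
proof -
  have "form_dom s \<subseteq> form_dom t" using form_dom_Bf[OF assms(1)] by simp
  with assms show ?thesis
    using bounded_form_plus_cancel[of t s] by (simp add: Bf_def)
qed

theorem theorem4p12:
  assumes "infinite_dimensional TYPE('a::complex_hilbert)"
  shows "sub_gen_effect_algebra (Vf :: 'a form set) Vf_oplus zero_form Bf"
  unfolding sub_gen_effect_algebra_def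
proof (intro conjI ballI impI)
  show "Bf \<subseteq> (Vf :: 'a form set)" by (auto simp: Bf_def)
  show "(zero_form :: 'a form) \<in> Bf" by (rule zero_form_in_Bf)
  fix x y w :: "'a form"
  assume "x \<in> Vf" "y \<in> Vf" "w \<in> Vf" and "Vf_oplus x y = Some w"
    and two: "x \<in> Bf \<and> y \<in> Bf \<or> x \<in> Bf \<and> w \<in> Bf \<or> y \<in> Bf \<and> w \<in> Bf"
  have "w = form_plus x y" "w = form_plus y x"
    using Vf_oplus_SomeD[OF \<open>Vf_oplus x y = Some w\<close>] form_plus_commute[of x y] by simp_all
  with two \<open>x \<in> Vf\<close> \<open>y \<in> Vf\<close> \<open>w \<in> Vf\<close>
  have "x \<in> Bf \<and> y \<in> Bf \<and> w \<in> Bf"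
    using form_plus_in_Bf Bf_form_plus_cancel by metis
  then show "x \<in> Bf" "y \<in> Bf" "w \<in> Bf" by simp_all
qed

end
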